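(* Let $q\in\mathbb C$ with $|q|=1$ and $q^2\neq 1$, and let $A,B$ be self-adjoint operators on a Hilbert space $\mathcal H$. Suppose $\lambda,\lambda q\in\rho(A)$ and $\mu,\mu q\in\rho(B)$. (i) If $\mathcal D$ is a linear subspace of $\mathcal D(AB)\cap\mathcal D(BA)$ and $ABf=qBAf$ for all $f\in\mathcal D$, then $\mathcal E:=(A-\lambda I)\mathcal D$ is a linear subspace of $\mathcal D(B)$ and $$BR_\lambda(A)g=qR_{\lambda q}(A)Bg\qquad(\ast)$$ for all $g\in\mathcal E$ (in particular $R_\lambda(A)g\in\mathcal D(B)$). (ii) If $\mathcal E$ is a linear subspace of $\mathcal D(B)$ such that $R_\lambda(A)g\in\mathcal D(B)$ and $(\ast)$ holds for all $g\in\mathcal E$, then every $f\in\mathcal D:=R_\lambda(A)\mathcal E$ lies in $\mathcal D(AB)\cap\mathcal D(BA)$ and satisfies $ABf=qBAf$. (iii) If $\mathcal E$ is a linear subspace of $\mathcal D(B)$ and $(\ast)$ holds for all $g\in\mathcal E$, then $$R_\lambda(A)R_\mu(B)h=qR_{\mu q}(B)R_{\lambda q}(A)h+\mu\lambda q(q-1)R_{\mu q}(B)R_{\lambda q}(A)R_\lambda(A)R_\mu(B)h\qquad(\ast\ast)$$ for all $h\in\mathcal F:=(B-\mu I)\mathcal E$. (iv) If $\mathcal F$ is a linear subspace of $\mathcal H$ such that $(\ast\ast)$ holds for all $h\in\mathcal F$, then $(\ast)$ holds (with $R_\lambda(A)g\in\mathcal D(B)$) for all $g\in\mathcal E:=R_\mu(B)\mathcal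 F$.
   Context: For a densely defined closed operator $T$, $\mathcal D(T)$ denotes its domain, $\rho(T)$ its resolvent set and $R_\lambda(T)=(T-\lambda I)^{-1}$ its resolvent for $\lambda\in\rho(T)$. Products of unbounded operators have their natural domains, e.g. $\mathcal D(AB)=\{f\in\mathcal D(B): Bf\in\mathcal D(A)\}$. *)

theory Defs
  imports "HOL-Analysis.Analysis"
begin

text \<open>HOL-Analysis has no complex inner product spaces, so we introduce the
standard notion as a type class: a complete normed space (Banach space) with a
compatible complex scalar multiplication and a complex inner product
(linear in the second argument, conjugate-linear in the first) inducing the norm.\<close>

class chilbert = banach +
  fixes scaleC :: "complex \<Rightarrow> 'a \<Rightarrow> 'a" (infixr \<open>*\<^sub>C\<close> 75)
    and cinner :: "'a \<Rightarrow> 'a \<Rightarrow> complex"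
  assumes scaleC_add_right: "a *\<^sub>C (x + y) = a *\<^sub>C x + a *\<^sub>C y"
    and scaleC_add_left: "(a + b) *\<^sub>C x = a *\<^sub>C x + b *\<^sub>C x"
    and scaleC_scaleC: "a *\<^sub>C (b *\<^sub>C x) = (a * b) *\<^sub>C x"
    and scaleC_one: "1 *\<^sub>C x = x"
    and scaleR_scaleC: "scaleR r x = complex_of_real r *\<^sub>C x"
    and cinner_commute: "cinner x y = cnj (cinner y x)"
    and cinner_add_right: "cinner x (y + z) = cinner x y + cinner x z"
    and cinner_scaleC_right: "cinner x (a *\<^sub>C y) = a * cinner x y"
    and cinner_self_nonneg: "Re (cinner x x) \<ge> 0 \<and> Im (cinner x x) = 0"
    and cinner_self_eq_zero: "cinner x x = 0 \<longleftrightarrow> x = 0"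
    and norm_eq_sqrt_cinner: "norm x = sqrt (Re (cinner x x))"

text \<open>A (possibly unbounded) operator is given by its domain D and its action T
(the values of T outside D are irrelevant).\<close>

definition csubspace :: "'a::chilbert set \<Rightarrow> bool" where
  "csubspace S \<longleftrightarrow> 0 \<in> S \<and> (\<forall>x\<in>S. \<forall>y\<in>S. x + y \<in> S) \<and> (\<forall>c. \<forall>x\<in>S. c *\<^sub>C x \<in> S)"

definition linear_op :: "'a::chilbert set \<Rightarrow> ('a \<Rightarrow> 'a) \<Rightarrow> bool" where
  "linear_op D T \<longleftrightarrow> csubspace D \<and>
     (\<forall>x\<in>D. \<forall>y\<in>D. T (x + y) = T x + T y) \<and> (\<forall>c. \<forall>x\<in>D. T (c *\<^sub>C x) = c *\<^sub>C T x)"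

definition adjoint_dom :: "'a::chilbert set \<Rightarrow> ('a \<Rightarrow> 'a) \<Rightarrow> 'a set" where
  "adjoint_dom D T = {y. \<exists>z. \<forall>x\<in>D. cinner (T x) y = cinner x z}"

text \<open>Self-adjoint: densely defined, D(T*) = D(T) and T* y = T y on D(T)
(for densely defined T the representing vector z is unique, so this says T* = T).\<close>
definition self_adjoint :: "'a::chilbert set \<Rightarrow> ('a \<Rightarrow> 'a) \<Rightarrow> bool" where
  "self_adjoint D T \<longleftrightarrow> linear_op D T \<and> closure D = UNIV \<and>
     adjoint_dom D T = D \<and> (\<forall>x\<in>D. \<forall>y\<in>D. cinner (T x) y = cinner x (T y))"

definition shift_op :: "('a::chilbert \<Rightarrow> 'a) \<Rightarrow> complex \<Rightarrow> 'a \<Rightarrow> 'a" where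
  "shift_op T l = (\<lambda>x. T x - l *\<^sub>C x)"

definition resolvent :: "'a::chilbert set \<Rightarrow> ('a \<Rightarrow> 'a) \<Rightarrow> complex \<Rightarrow> 'a \<Rightarrow> 'a" where
  "resolvent D T l = inv_into D (shift_op T l)"

definition resolvent_set :: "'a::chilbert set \<Rightarrow> ('a \<Rightarrow> 'a) \<Rightarrow> complex set" where
  "resolvent_set D T = {l. bij_betw (shift_op T l) D UNIV \<and>
       (\<exists>C. \<forall>y. norm (resolvent D T l y) \<le> C * norm y)}"

definition prod_dom :: "'a set \<Rightarrow> 'a set \<Rightarrow> ('a \<Rightarrow> 'a) \<Rightarrow> 'a set" where
  "prod_dom DS DT T = {f \<in> DT. T f \<in> DS}"

end

theory Submission
  imports Defs
begin

text \<open>For (i) and (ii): if f = R_l(A) g with g = (A - l) f, then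
(A - lq) B f = A B f - q B A f + q B g, so B f = q R_lq(A) B g holds exactly when
A B f = q B A f. For (iii) and (iv): with h = (B - m) g and u = R_l(A) g, the resolvent
identity u = R_lq(A) g + l(1 - q) R_lq(A) u shows that (B - mq) u equals
q R_lq(A) h + m l q (q - 1) R_lq(A) u precisely when B u = q R_lq(A) B g;
applying R_mq(B) to the former gives (**) at h, so (*) at g and (**) at h are equivalent.\<close>

lemma scaleC_zero_left [simp]: "0 *\<^sub>C (x::'a::chilbert) = 0"
  using scaleR_scaleC[of 0 x] by simp

lemma scaleC_zero_right [simp]: "a *\<^sub>C (0::'a::chilbert) = 0"
  using scaleC_add_right[of a 0 0] by simp

lemma scaleC_minus_left: "(- a) *\<^sub>C (x::'a::chilbert) = - (a *\<^sub>C x)"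
  using scaleC_add_left[of a "- a" x] by (simp add: eq_neg_iff_add_eq_0 add.commute)

lemma scaleC_minus_right: "a *\<^sub>C (- (x::'a::chilbert)) = - (a *\<^sub>C x)"
  using scaleC_add_right[of a x "- x"] by (simp add: eq_neg_iff_add_eq_0 add.commute)

lemma scaleC_diff_right: "a *\<^sub>C ((x::'a::chilbert) - y) = a *\<^sub>C x - a *\<^sub>C y"
  using scaleC_add_right[of a x "- y"] scaleC_minus_right by simp

lemma scaleC_diff_left: "(a - b) *\<^sub>C (x::'a::chilbert) = a *\<^sub>C x - b *\<^sub>C x"
  using scaleC_add_left[of a "- b" x] scaleC_minus_left by simp

lemma csubspace_zero: "csubspace S \<Longrightarrow> 0 \<in> S"
  by (simp add: csubspace_def)

lemma csubspace_add: "csubspace S \<Longrightarrow> x \<in> S \<Longrightarrow> y \<in> S \<Longrightarrow> x + y \<in> S"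
  by (simp add: csubspace_def)

lemma csubspace_scaleC: "csubspace S \<Longrightarrow> x \<in> S \<Longrightarrow> c *\<^sub>C x \<in> S"
  by (simp add: csubspace_def)

lemma csubspace_diff:
  assumes "csubspace S" "x \<in> S" "y \<in> S"
  shows "x - y \<in> S"
proof -
  have "(- 1) *\<^sub>C y \<in> S" using assms csubspace_scaleC by blast
  then have "- y \<in> S" using scaleC_minus_left[of 1 y] by (simp add: scaleC_one)
  then show ?thesis using assms csubspace_add[of S x "- y"] by simp
qed

lemma csubspace_UNIV: "csubspace UNIV"
  by (simp add: csubspace_def)

lemma linear_op_csubspace: "linear_op D T \<Longrightarrow> csubspace D"
  by (simp add: linear_op_def)

lemma linear_op_add: "linear_op D T \<Longrightarrow> x \<in> D \<Longrightarrow> y \<in> D \<Longrightarrow> T (x + y) = T x + T y"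
  by (simp add: linear_op_def)

lemma linear_op_scaleC: "linear_op D T \<Longrightarrow> x \<in> D \<Longrightarrow> T (c *\<^sub>C x) = c *\<^sub>C T x"
  by (simp add: linear_op_def)

lemma linear_op_diff:
  assumes T: "linear_op D T" and "x \<in> D" "y \<in> D"
  shows "T (x - y) = T x - T y"
proof -
  have "x - y \<in> D" using assms csubspace_diff linear_op_csubspace by blast
  then have "T (x - y) + T y = T x" using linear_op_add[OF T _ \<open>y \<in> D\<close>] by fastforce
  then show ?thesis by (simp add: algebra_simps)
qed

lemma linear_op_shift_op:
  assumes "linear_op D T"
  shows "linear_op D (shift_op T l)"
  using assms unfolding linear_op_def shift_op_def
  by (simp add: scaleC_add_right scaleC_diff_right scaleC_scaleC mult.commute algebra_simps)

lemma csubspace_linear_image: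
  assumes T: "linear_op D T" and S: "csubspace S" "S \<subseteq> D"
  shows "csubspace (T ` S)"
  unfolding csubspace_def
proof (intro conjI ballI allI)
  have "T 0 = 0"
    using linear_op_diff[OF T, of 0 0] csubspace_zero linear_op_csubspace[OF T] by fastforce
  then show "0 \<in> T ` S" using csubspace_zero[OF S(1)] by (metis image_eqI)
next
  fix x y assume "x \<in> T ` S" "y \<in> T ` S"
  then obtain a b where "a \<in> S" "b \<in> S" "x = T a" "y = T b" by auto
  then show "x + y \<in> T ` S"
    using linear_op_add[OF T, of a b] csubspace_add[OF S(1)] S(2) by (metis image_eqI subsetD)
next
  fix c x assume "x \<in> T ` S"
  then obtain a where "a \<in> S" "x = T a" by auto
  then show "c *\<^sub>C x \<in> T ` S"
    using linear_op_scaleC[OF T, of a c] csubspace_scaleC[OF S(1)] S(2) by (metis image_eqI subsetD)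
qed

lemma resolvent_in_dom: "l \<in> resolvent_set D T \<Longrightarrow> resolvent D T l y \<in> D"
  unfolding resolvent_set_def resolvent_def
  by (metis (no_types, lifting) UNIV_I bij_betw_def inv_into_into mem_Collect_eq)

lemma shift_op_resolvent: "l \<in> resolvent_set D T \<Longrightarrow> shift_op T l (resolvent D T l y) = y"
  unfolding resolvent_set_def resolvent_def
  by (metis (no_types, lifting) UNIV_I bij_betw_inv_into_right mem_Collect_eq)

lemma resolvent_shift_op: "l \<in> resolvent_set D T \<Longrightarrow> x \<in> D \<Longrightarrow> resolvent D T l (shift_op T l x) = x"
  unfolding resolvent_set_def resolvent_def
  by (metis (no_types, lifting) bij_betw_inv_into_left mem_Collect_eq)

lemma resolvent_eq_iff:
  "l \<in> resolvent_set D T \<Longrightarrow> resolvent D T l y = x \<longleftrightarrow> x \<in> D \<and> shift_op T l x = y"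
  using resolvent_in_dom shift_op_resolvent resolvent_shift_op by metis

lemma apply_resolvent: "l \<in> resolvent_set D T \<Longrightarrow> T (resolvent D T l y) = y + l *\<^sub>C resolvent D T l y"
  using shift_op_resolvent[of l D T y] by (simp add: shift_op_def algebra_simps)

lemma linear_op_resolvent:
  assumes T: "linear_op D T" and l: "l \<in> resolvent_set D T"
  shows "linear_op UNIV (resolvent D T l)"
proof -
  note S = linear_op_shift_op[OF T, of l]
  have "resolvent D T l (x + y) = resolvent D T l x + resolvent D T l y" for x y
    using linear_op_add[OF S] csubspace_add[OF linear_op_csubspace[OF T]]
    by (simp add: resolvent_eq_iff[OF l] resolvent_in_dom[OF l] shift_op_resolvent[OF l])
  moreover have "resolvent D T l (c *\<^sub>C x) = c *\<^sub>C resolvent D T l x" for c x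
    using linear_op_scaleC[OF S] csubspace_scaleC[OF linear_op_csubspace[OF T]]
    by (simp add: resolvent_eq_iff[OF l] resolvent_in_dom[OF l] shift_op_resolvent[OF l])
  ultimately show ?thesis by (simp add: linear_op_def csubspace_UNIV)
qed

lemma resolvent_identity:
  assumes T: "linear_op D T" and l: "l \<in> resolvent_set D T" and k: "k \<in> resolvent_set D T"
  shows "resolvent D T l g = resolvent D T k g + (l - k) *\<^sub>C resolvent D T k (resolvent D T l g)"
proof -
  define v where "v = resolvent D T l g"
  have "shift_op T k v = g + (l - k) *\<^sub>C v"
    using shift_op_resolvent[OF l, of g] unfolding v_def[symmetric]
    by (simp add: shift_op_def scaleC_diff_left algebra_simps)
  then have "resolvent D T k (g + (l - k) *\<^sub>C v) = v"
    using resolvent_in_dom[OF l] v_def by (simp add: resolvent_eq_iff[OF k])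
  then show ?thesis
    unfolding v_def[symmetric]
    using linear_op_add[OF linear_op_resolvent[OF T k]] linear_op_scaleC[OF linear_op_resolvent[OF T k]]
    by simp
qed

definition resolvent_intertwined ::
    "'a::chilbert set \<Rightarrow> ('a \<Rightarrow> 'a) \<Rightarrow> 'a set \<Rightarrow> ('a \<Rightarrow> 'a) \<Rightarrow> complex \<Rightarrow> complex \<Rightarrow> 'a \<Rightarrow> bool" where
  "resolvent_intertwined DA A DB B q l g \<longleftrightarrow>
     resolvent DA A l g \<in> DB \<and> B (resolvent DA A l g) = q *\<^sub>C resolvent DA A (l * q) (B g)"

definition resolvents_qcommute ::
    "'a::chilbert set \<Rightarrow> ('a \<Rightarrow> 'a) \<Rightarrow> 'a set \<Rightarrow> ('a \<Rightarrow> 'a) \<Rightarrow> complex \<Rightarrow> complex \<Rightarrow> complex \<Rightarrow> 'a \<Rightarrow> bool" where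
  "resolvents_qcommute DA A DB B q l m h \<longleftrightarrow>
     resolvent DA A l (resolvent DB B m h) =
       q *\<^sub>C resolvent DB B (m * q) (resolvent DA A (l * q) h)
       + (m * l * q * (q - 1)) *\<^sub>C
           resolvent DB B (m * q) (resolvent DA A (l * q) (resolvent DA A l (resolvent DB B m h)))"

lemma qcommute_imp_resolvent_intertwined:
  assumes A: "linear_op DA A" and B: "linear_op DB B"
    and l: "l \<in> resolvent_set DA A" and lq: "l * q \<in> resolvent_set DA A"
    and f: "f \<in> prod_dom DA DB B \<inter> prod_dom DB DA A" and comm: "A (B f) = q *\<^sub>C B (A f)"
  shows "shift_op A l f \<in> DB" and "resolvent_intertwined DA A DB B q l (shift_op A l f)"
proof -
  note SB = linear_op_csubspace[OF B]
  have fA: "f \<in> DA" and fB: "f \<in> DB" and BfA: "B f \<in> DA" and AfB: "A f \<in> DB"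
    using f by (auto simp: prod_dom_def)
  define g where "g = shift_op A l f"
  show gB: "shift_op A l f \<in> DB"
    using AfB fB csubspace_diff[OF SB] csubspace_scaleC[OF SB] by (simp add: shift_op_def)
  have Bg: "B g = B (A f) - l *\<^sub>C B f"
    using AfB fB linear_op_diff[OF B] linear_op_scaleC[OF B] csubspace_scaleC[OF SB]
    by (simp add: g_def shift_op_def)
  have "shift_op A (l * q) (B f) = q *\<^sub>C B g"
    using comm Bg by (simp add: shift_op_def scaleC_diff_right scaleC_scaleC mult.commute)
  then have "resolvent DA A (l * q) (q *\<^sub>C B g) = B f"
    using BfA by (simp add: resolvent_eq_iff[OF lq])
  then have "B f = q *\<^sub>C resolvent DA A (l * q) (B g)"
    using linear_op_scaleC[OF linear_op_resolvent[OF A lq]] by simp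
  then show "resolvent_intertwined DA A DB B q l (shift_op A l f)"
    using resolvent_shift_op[OF l fA] fB unfolding g_def resolvent_intertwined_def by simp
qed

lemma resolvent_intertwined_imp_qcommute:
  assumes A: "linear_op DA A" and B: "linear_op DB B"
    and l: "l \<in> resolvent_set DA A" and lq: "l * q \<in> resolvent_set DA A"
    and gB: "g \<in> DB" and g: "resolvent_intertwined DA A DB B q l g"
  defines "f \<equiv> resolvent DA A l g"
  shows "f \<in> prod_dom DA DB B \<inter> prod_dom DB DA A" and "A (B f) = q *\<^sub>C B (A f)"
proof -
  note SA = linear_op_csubspace[OF A] and SB = linear_op_csubspace[OF B]
  define x where "x = resolvent DA A (l * q) (B g)"
  have fA: "f \<in> DA" using resolvent_in_dom[OF l] f_def by simp
  have fB: "f \<in> DB" and Bf: "B f = q *\<^sub>C x"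
    using g unfolding resolvent_intertwined_def f_def x_def by auto
  have xA: "x \<in> DA" using resolvent_in_dom[OF lq] x_def by simp
  have Af: "A f = g + l *\<^sub>C f" using apply_resolvent[OF l] f_def by simp
  have Ax: "A x = B g + (l * q) *\<^sub>C x" using apply_resolvent[OF lq] x_def by simp
  show "f \<in> prod_dom DA DB B \<inter> prod_dom DB DA A"
    using fA fB Bf Af csubspace_scaleC[OF SA xA] csubspace_add[OF SB gB] csubspace_scaleC[OF SB fB]
    by (simp add: prod_dom_def)
  have "A (B f) = q *\<^sub>C B g + (q * (l * q)) *\<^sub>C x"
    using Bf linear_op_scaleC[OF A xA] Ax by (simp add: scaleC_add_right scaleC_scaleC)
  moreover have "B (A f) = B g + (l * q) *\<^sub>C x"
    using Af linear_op_add[OF B gB] csubspace_scaleC[OF SB fB] linear_op_scaleC[OF B fB] Bf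
    by (simp add: scaleC_scaleC)
  ultimately show "A (B f) = q *\<^sub>C B (A f)"
    by (simp add: scaleC_add_right scaleC_scaleC mult_ac)
qed

lemma resolvent_intertwined_iff_resolvents_qcommute:
  assumes A: "linear_op DA A" and B: "linear_op DB B"
    and l: "l \<in> resolvent_set DA A" and lq: "l * q \<in> resolvent_set DA A"
    and m: "m \<in> resolvent_set DB B" and mq: "m * q \<in> resolvent_set DB B"
    and gB: "g \<in> DB"
  shows "resolvent_intertwined DA A DB B q l g \<longleftrightarrow>
    resolvents_qcommute DA A DB B q l m (shift_op B m g)"
proof -
  note RA = linear_op_resolvent[OF A lq] and RB = linear_op_resolvent[OF B mq]
  define h where "h = shift_op B m g"
  define c where "c = m * l * q * (q - 1)"
  define u where "u = resolvent DA A l g"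
  define a where "a = resolvent DA A (l * q) g"
  define b where "b = resolvent DA A (l * q) u"
  define w where "w = q *\<^sub>C resolvent DA A (l * q) h + c *\<^sub>C b"
  have "u = a + (l - l * q) *\<^sub>C b"
    using resolvent_identity[OF A l lq, of g] u_def a_def b_def by simp
  moreover have "(m * q) * (l - l * q) = - c" by (simp add: c_def algebra_simps)
  ultimately have mqu: "(m * q) *\<^sub>C u = (m * q) *\<^sub>C a - c *\<^sub>C b"
    by (simp add: scaleC_add_right scaleC_scaleC scaleC_minus_left)
  have "B g = h + m *\<^sub>C g" by (simp add: h_def shift_op_def)
  then have RBg: "resolvent DA A (l * q) (B g) = resolvent DA A (l * q) h + m *\<^sub>C a"
    using linear_op_add[OF RA] linear_op_scaleC[OF RA] a_def by simp
  have "resolvents_qcommute DA A DB B q l m h \<longleftrightarrow> u = resolvent DB B (m * q) w"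
    using resolvent_shift_op[OF m gB] linear_op_add[OF RB] linear_op_scaleC[OF RB]
    by (simp add: resolvents_qcommute_def h_def u_def b_def c_def w_def)
  also have "\<dots> \<longleftrightarrow> u \<in> DB \<and> B u - (m * q) *\<^sub>C u = w"
    using resolvent_eq_iff[OF mq, of w u] by (metis shift_op_def)
  also have "\<dots> \<longleftrightarrow> u \<in> DB \<and> B u = q *\<^sub>C resolvent DA A (l * q) (B g)"
    unfolding mqu RBg w_def by (auto simp: scaleC_add_right scaleC_scaleC mult_ac algebra_simps)
  finally show ?thesis
    by (simp add: resolvent_intertwined_def u_def h_def)
qed

theorem mainTheorem1:
  fixes DA DB :: "'a::chilbert set" and A B :: "'a \<Rightarrow> 'a" and q l m :: complex
  assumes "cmod q = 1" and "q\<^sup>2 \<noteq> 1"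
    and "self_adjoint DA A" and "self_adjoint DB B"
    and "l \<in> resolvent_set DA A" and "l * q \<in> resolvent_set DA A"
    and "m \<in> resolvent_set DB B" and "m * q \<in> resolvent_set DB B"
  shows
  "(\<forall>\<D>. csubspace \<D> \<and> \<D> \<subseteq> prod_dom DA DB B \<inter> prod_dom DB DA A \<and>
        (\<forall>f\<in>\<D>. A (B f) = q *\<^sub>C B (A f)) \<longrightarrow>
      (let \<E> = shift_op A l ` \<D> in
        csubspace \<E> \<and> \<E> \<subseteq> DB \<and>
        (\<forall>g\<in>\<E>. resolvent DA A l g \<in> DB \<and>
           B (resolvent DA A l g) = q *\<^sub>C resolvent DA A (l * q) (B g))))
   \<and>
   (\<forall>\<E>. csubspace \<E> \<and> \<E> \<subseteq> DB \<and>
        (\<forall>g\<in>\<E>. resolvent DA A l g \<in> DB \<and>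
           B (resolvent DA A l g) = q *\<^sub>C resolvent DA A (l * q) (B g)) \<longrightarrow>
      (\<forall>f\<in>resolvent DA A l ` \<E>.
         f \<in> prod_dom DA DB B \<inter> prod_dom DB DA A \<and> A (B f) = q *\<^sub>C B (A f)))
   \<and>
   (\<forall>\<E>. csubspace \<E> \<and> \<E> \<subseteq> DB \<and>
        (\<forall>g\<in>\<E>. resolvent DA A l g \<in> DB \<and>
           B (resolvent DA A l g) = q *\<^sub>C resolvent DA A (l * q) (B g)) \<longrightarrow>
      (\<forall>h\<in>shift_op B m ` \<E>.
         resolvent DA A l (resolvent DB B m h) =
           q *\<^sub>C resolvent DB B (m * q) (resolvent DA A (l * q) h)
           + (m * l * q * (q - 1)) *\<^sub>C
               resolvent DB B (m * q) (resolvent DA A (l * q)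
                 (resolvent DA A l (resolvent DB B m h)))))
   \<and>
   (\<forall>\<F>. csubspace \<F> \<and>
        (\<forall>h\<in>\<F>.
         resolvent DA A l (resolvent DB B m h) =
           q *\<^sub>C resolvent DB B (m * q) (resolvent DA A (l * q) h)
           + (m * l * q * (q - 1)) *\<^sub>C
               resolvent DB B (m * q) (resolvent DA A (l * q)
                 (resolvent DA A l (resolvent DB B m h)))) \<longrightarrow>
      (\<forall>g\<in>resolvent DB B m ` \<F>. resolvent DA A l g \<in> DB \<and>
           B (resolvent DA A l g) = q *\<^sub>C resolvent DA A (l * q) (B g)))"
proof -
  have A: "linear_op DA A" and B: "linear_op DB B"
    using assms(3,4) by (auto simp: self_adjoint_def)
  note res = assms(5-8)
  note i = qcommute_imp_resolvent_intertwined[OF A B res(1,2)]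
  note ii = resolvent_intertwined_imp_qcommute[OF A B res(1,2)]
  note iii_iv = resolvent_intertwined_iff_resolvents_qcommute[OF A B res]
  show ?thesis
    unfolding resolvent_intertwined_def[symmetric] resolvents_qcommute_def[symmetric]
  proof (intro conjI allI impI)
    fix \<D> assume "csubspace \<D> \<and> \<D> \<subseteq> prod_dom DA DB B \<inter> prod_dom DB DA A \<and>
      (\<forall>f\<in>\<D>. A (B f) = q *\<^sub>C B (A f))"
    then have \<D>: "csubspace \<D>" "\<D> \<subseteq> DA"
      and f: "\<And>f. f \<in> \<D> \<Longrightarrow> f \<in> prod_dom DA DB B \<inter> prod_dom DB DA A"
        "\<And>f. f \<in> \<D> \<Longrightarrow> A (B f) = q *\<^sub>C B (A f)"
      by (auto simp: prod_dom_def)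
    show "let \<E> = shift_op A l ` \<D> in csubspace \<E> \<and> \<E> \<subseteq> DB \<and>
        (\<forall>g\<in>\<E>. resolvent_intertwined DA A DB B q l g)"
      using csubspace_linear_image[OF linear_op_shift_op[OF A] \<D>] i[OF f(1) f(2)]
      by (auto simp: Let_def)
  next
    fix \<E> assume "csubspace \<E> \<and> \<E> \<subseteq> DB \<and> (\<forall>g\<in>\<E>. resolvent_intertwined DA A DB B q l g)"
    then have \<E>: "\<And>g. g \<in> \<E> \<Longrightarrow> g \<in> DB \<and> resolvent_intertwined DA A DB B q l g"
      by auto
    show "\<forall>f\<in>resolvent DA A l ` \<E>.
        f \<in> prod_dom DA DB B \<inter> prod_dom DB DA A \<and> A (B f) = q *\<^sub>C B (A f)"
      using ii \<E> by blast
    show "\<forall>h\<in>shift_op B m ` \<E>. resolvents_qcommute DA A DB B q l m h"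
      using iii_iv \<E> by blast
  next
    fix \<F> assume "csubspace \<F> \<and> (\<forall>h\<in>\<F>. resolvents_qcommute DA A DB B q l m h)"
    then show "\<forall>g\<in>resolvent DB B m ` \<F>. resolvent_intertwined DA A DB B q l g"
      using iii_iv[OF resolvent_in_dom[OF res(3)]] shift_op_resolvent[OF res(3)] by auto
  qed
qed

end
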